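(* Let $\Bbbk$ be an algebraically closed field of characteristic zero and $H$ the $\Bbbk$-algebra generated by $b,c,z$ with relations $b^2=c^2=1$, $bc=cb$, $zb=-bz$, $zc=-cz$, $z^2=0$. Let $e_0=\frac14(1+b)(1+c)$, $e_1=\frac14(1+b)(1-c)$, $e_2=\frac14(1-b)(1+c)$, $e_3=\frac14(1-b)(1-c)$. Then the two-sided ideals of $H$ are exactly the following $49$ pairwise distinct ideals: $(0)$, $(1)$, $(e_0)$, $(e_1)$, $(e_2)$, $(e_3)$, $(e_0+e_1)$, $(e_0+e_2)$, $(e_0+e_3)$, $(e_1+e_2)$, $(e_1+e_3)$, $(e_2+e_3)$, $(e_0+e_1+e_2)$, $(e_0+e_1+e_3)$, $(e_0+e_2+e_3)$, $(e_1+e_2+e_3)$, $(z)$, $(ze_0)$, $(ze_1)$, $(ze_2)$, $(ze_3)$, $(z(e_0+e_1))$, $(z(e_0+e_2))$, $(z(e_0+e_3))$, $(z(e_1+e_2))$, $(z(e_1+e_3))$, $(z(e_2+e_3))$, $(z(e_0+e_1+e_2))$, $(z(e_0+e_1+e_3))$, $(z(e_0+e_2+e_3))$, $(z(e_1+e_2+e_3))$, $(z+e_0)$, $(ze_1+e_0)$, $(ze_2+e_0)$, $(z+e_1)$, $(ze_0+e_1)$, $(ze_3+e_1)$, $(z+e_2)$, $(ze_0+e_2)$, $(ze_3+e_2)$, $(z+e_3)$, $(ze_1+e_3)$, $(ze_2+e_3)$, $(z+e_0+e_3)$, $(ze_1+e_0+e_3)$, $(ze_2+e_0+e_3)$, $(z+e_1+e_2)$,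 $(ze_0+e_1+e_2)$, $(ze_3+e_1+e_2)$.
   Context: $(a)$ denotes the two-sided ideal of $H$ generated by $a$. *)

theory Defs
  imports "HOL-Computational_Algebra.Polynomial" "HOL-Algebra.Ideal"
begin

text \<open>An element is its coefficient function: x i j l is the
  coefficient of b^i c^j z^l (True = exponent 1, False = exponent 0).\<close>

type_synonym 'k hel = "bool \<Rightarrow> bool \<Rightarrow> bool \<Rightarrow> 'k"

text \<open>Product of monomials:
  (b^i1 c^j1 z^l1)(b^i2 c^j2 z^l2) = (-1)^(l1*(i2+j2)) b^(i1+i2) c^(j1+j2) z^(l1+l2),
  which is 0 when l1 = l2 = 1.\<close>

definition hmul :: "'k::field hel \<Rightarrow> 'k hel \<Rightarrow> 'k hel" where
  "hmul x y = (\<lambda>i j l. \<Sum>i1\<in>UNIV. \<Sum>j1\<in>UNIV. \<Sum>l1\<in>UNIV. \<Sum>l2\<in>UNIV.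
      (let i2 = (i \<noteq> i1); j2 = (j \<noteq> j1) in
       if (l1 \<and> l2) \<or> (l1 \<or> l2) \<noteq> l then 0
       else (if l1 \<and> i2 \<noteq> j2 then -1 else 1) * x i1 j1 l1 * y i2 j2 l2))"

definition hadd :: "'k::field hel \<Rightarrow> 'k hel \<Rightarrow> 'k hel" where
  "hadd x y = (\<lambda>i j l. x i j l + y i j l)"

definition hsmul :: "'k::field \<Rightarrow> 'k hel \<Rightarrow> 'k hel" where
  "hsmul a x = (\<lambda>i j l. a * x i j l)"

definition hmono :: "bool \<Rightarrow> bool \<Rightarrow> bool \<Rightarrow> 'k::field hel" where
  "hmono i j l = (\<lambda>i' j' l'. if i' = i \<and> j' = j \<and> l' = l then 1 else 0)"

definition Halg :: "'k::field hel ring" where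
  "Halg = \<lparr>carrier = UNIV, mult = hmul, one = hmono False False False,
           zero = (\<lambda>_ _ _. 0), add = hadd\<rparr>"

definition hb :: "'k::field hel" where "hb = hmono True False False"
definition hc :: "'k::field hel" where "hc = hmono False True False"
definition hz :: "'k::field hel" where "hz = hmono False False True"

definition e0 :: "'k::field hel" where
  "e0 = hsmul (1/4) (hmul (hadd \<one>\<^bsub>Halg\<^esub> hb) (hadd \<one>\<^bsub>Halg\<^esub> hc))"
definition e1 :: "'k::field hel" where
  "e1 = hsmul (1/4) (hmul (hadd \<one>\<^bsub>Halg\<^esub> hb) (hadd \<one>\<^bsub>Halg\<^esub> (hsmul (-1) hc)))"
definition e2 :: "'k::field hel" where
  "e2 = hsmul (1/4) (hmul (hadd \<one>\<^bsub>Halg\<^esub> (hsmul (-1) hb)) (hadd \<one>\<^bsub>Halg\<^esub> hc))"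
definition e3 :: "'k::field hel" where
  "e3 = hsmul (1/4) (hmul (hadd \<one>\<^bsub>Halg\<^esub> (hsmul (-1) hb)) (hadd \<one>\<^bsub>Halg\<^esub> (hsmul (-1) hc)))"

definition H_relations :: "'k::field itself \<Rightarrow> bool" where
  "H_relations _ \<longleftrightarrow>
     hmul hb hb = (\<one>\<^bsub>Halg\<^esub> :: 'k hel) \<and> hmul hc hc = (\<one>\<^bsub>Halg\<^esub> :: 'k hel) \<and>
     hmul hb hc = (hmul hc hb :: 'k hel) \<and>
     hmul hz hb = hsmul (-1) (hmul hb hz :: 'k hel) \<and>
     hmul hz hc = hsmul (-1) (hmul hc hz :: 'k hel) \<and>
     hmul hz hz = (\<zero>\<^bsub>Halg\<^esub> :: 'k hel)"

lemma "H_relations TYPE(real)"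
  unfolding H_relations_def hmul_def hb_def hc_def hz_def hmono_def Halg_def hsmul_def
  by (auto simp: fun_eq_iff UNIV_bool Let_def)

definition gens49 :: "'k::field hel list" where
  "gens49 = (let m = hmul; p = hadd; z = hz in
   [ \<zero>\<^bsub>Halg\<^esub>, \<one>\<^bsub>Halg\<^esub>, e0, e1, e2, e3,
     p e0 e1, p e0 e2, p e0 e3, p e1 e2, p e1 e3, p e2 e3,
     p (p e0 e1) e2, p (p e0 e1) e3, p (p e0 e2) e3, p (p e1 e2) e3,
     z, m z e0, m z e1, m z e2, m z e3,
     m z (p e0 e1), m z (p e0 e2), m z (p e0 e3), m z (p e1 e2), m z (p e1 e3), m z (p e2 e3),
     m z (p (p e0 e1) e2), m z (p (p e0 e1) e3), m z (p (p e0 e2) e3), m z (p (p e1 e2) e3),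
     p z e0, p (m z e1) e0, p (m z e2) e0,
     p z e1, p (m z e0) e1, p (m z e3) e1,
     p z e2, p (m z e0) e2, p (m z e3) e2,
     p z e3, p (m z e1) e3, p (m z e2) e3,
     p z (p e0 e3), p (m z e1) (p e0 e3), p (m z e2) (p e0 e3),
     p z (p e1 e2), p (m z e0) (p e1 e2), p (m z e3) (p e1 e2) ])"

end

theory Submission
  imports Defs
begin

(*
  Decomposing by the characters of the Klein group generated by b and c, H has the basis
  e_pq, e_pq z (p, q boolean), where the e_pq are orthogonal idempotents with
  e_pq z = z e_(not p)(not q). Sandwiching an element between idempotents isolates each of
  its coordinates, so every ideal is spanned by the basis vectors it contains. It is thus
  described by a set S of idempotents and a set T of elements e_pq z, and the only
  constraint is that e_pq in S forces both e_pq z and z e_pq into T. The pairs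
  {e_00, e_11} and {e_01, e_10} do not interact, each admits 4 + 3 = 7 configurations, and
  the 49 listed generators realise each of the 7 * 7 pairs (S, T) exactly once.
*)

definition chi :: "bool \<Rightarrow> bool \<Rightarrow> bool \<Rightarrow> bool \<Rightarrow> 'k::field" where
  "chi p q i j = (if (p \<and> i) = (q \<and> j) then 1 else -1)"

(*
  ecoord p q and zcoord p q are the coordinates in the basis hE p q, hZ p q defined below
  (the e_pq and e_pq z above); ecoord p q is the character b \<mapsto> (-1)^p, c \<mapsto> (-1)^q,
  z \<mapsto> 0 of H.
*)
definition ecoord :: "bool \<Rightarrow> bool \<Rightarrow> 'k::field hel \<Rightarrow> 'k" where
  "ecoord p q x = (\<Sum>i\<in>UNIV. \<Sum>j\<in>UNIV. chi p q i j * x i j False)"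

definition zcoord :: "bool \<Rightarrow> bool \<Rightarrow> 'k::field hel \<Rightarrow> 'k" where
  "zcoord p q x = (\<Sum>i\<in>UNIV. \<Sum>j\<in>UNIV. chi p q i j * x i j True)"

lemma hel_coeff_inversion:
  fixes x :: "'k::field_char_0 hel"
  shows "x i j l = (\<Sum>p\<in>UNIV. \<Sum>q\<in>UNIV. chi p q i j * (if l then zcoord p q x else ecoord p q x)) / 4"
  by (cases i; cases j; cases l) (simp_all add: ecoord_def zcoord_def chi_def UNIV_bool field_simps)

lemma hel_eqI:
  fixes x y :: "'k::field_char_0 hel"
  assumes "\<And>p q. ecoord p q x = ecoord p q y" and "\<And>p q. zcoord p q x = zcoord p q y"
  shows "x = y"
proof (intro ext)
  fix i j l
  show "x i j l = y i j l"
    using hel_coeff_inversion[of x i j l] hel_coeff_inversion[of y i j l] by (simp only: assms)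
qed

lemma ecoord_hmul [simp]: "ecoord p q (hmul x y) = ecoord p q x * ecoord p q y"
  by (cases p; cases q) (simp_all add: ecoord_def hmul_def chi_def UNIV_bool Let_def algebra_simps)

lemma zcoord_hmul [simp]:
  "zcoord p q (hmul x y) = ecoord p q x * zcoord p q y + zcoord p q x * ecoord (\<not> p) (\<not> q) y"
  by (cases p; cases q)
    (simp_all add: ecoord_def zcoord_def hmul_def chi_def UNIV_bool Let_def algebra_simps)

lemma ecoord_hadd [simp]: "ecoord p q (hadd x y) = ecoord p q x + ecoord p q y"
  and zcoord_hadd [simp]: "zcoord p q (hadd x y) = zcoord p q x + zcoord p q y"
  by (simp_all add: ecoord_def zcoord_def hadd_def UNIV_bool algebra_simps)

lemma ecoord_hsmul [simp]: "ecoord p q (hsmul c x) = c * ecoord p q x"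
  and zcoord_hsmul [simp]: "zcoord p q (hsmul c x) = c * zcoord p q x"
  by (simp_all add: ecoord_def zcoord_def hsmul_def UNIV_bool algebra_simps)

lemma ecoord_zero [simp]: "ecoord p q (\<lambda>_ _ _. 0) = 0"
  and zcoord_zero [simp]: "zcoord p q (\<lambda>_ _ _. 0) = 0"
  by (simp_all add: ecoord_def zcoord_def)

lemma ecoord_hmono [simp]: "ecoord p q (hmono i j l) = (if l then 0 else chi p q i j)"
  and zcoord_hmono [simp]: "zcoord p q (hmono i j l) = (if l then chi p q i j else 0)"
  by (cases i; cases j; simp add: ecoord_def zcoord_def hmono_def UNIV_bool)+

lemma Halg_simps [simp]:
  "carrier Halg = UNIV" "mult Halg = hmul" "one Halg = hmono False False False"
  "zero Halg = (\<lambda>_ _ _. 0)" "add Halg = hadd"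
  by (simp_all add: Halg_def)

lemma ring_Halg: "ring (Halg :: 'k::field_char_0 hel ring)"
proof (rule ringI)
  show "abelian_group (Halg :: 'k hel ring)"
  proof (rule abelian_groupI)
    fix x :: "'k hel"
    show "\<exists>y\<in>carrier Halg. y \<oplus>\<^bsub>Halg\<^esub> x = \<zero>\<^bsub>Halg\<^esub>"
      by (rule bexI[of _ "hsmul (-1) x"]) (auto intro!: hel_eqI)
  qed (auto intro!: hel_eqI simp: algebra_simps)
  show "monoid (Halg :: 'k hel ring)"
    by (rule monoidI) (auto intro!: hel_eqI simp: chi_def algebra_simps)
qed (auto intro!: hel_eqI simp: algebra_simps)

lemma a_inv_Halg: "a_inv (Halg :: 'k::field_char_0 hel ring) x = hsmul (-1) x"
  by (rule abelian_group.minus_equality[OF ring.is_abelian_group[OF ring_Halg]])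
    (auto intro!: hel_eqI)

definition hE :: "bool \<Rightarrow> bool \<Rightarrow> 'k::field hel" where
  "hE p q = (\<lambda>i j l. if l then 0 else chi p q i j / 4)"

definition hZ :: "bool \<Rightarrow> bool \<Rightarrow> 'k::field hel" where
  "hZ p q = (\<lambda>i j l. if l then chi p q i j / 4 else 0)"

lemma ecoord_hE [simp]: "ecoord r s (hE p q :: 'k::field_char_0 hel) = (if r = p \<and> s = q then 1 else 0)"
  and zcoord_hE [simp]: "zcoord r s (hE p q :: 'k::field_char_0 hel) = 0"
  and ecoord_hZ [simp]: "ecoord r s (hZ p q :: 'k::field_char_0 hel) = 0"
  and zcoord_hZ [simp]: "zcoord r s (hZ p q :: 'k::field_char_0 hel) = (if r = p \<and> s = q then 1 else 0)"
  by (cases p; cases q; cases r; cases s;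
      simp add: ecoord_def zcoord_def hE_def hZ_def chi_def UNIV_bool)+

lemma ecoord_hz [simp]: "ecoord p q (hz :: 'k::field hel) = 0"
  and zcoord_hz [simp]: "zcoord p q (hz :: 'k::field hel) = 1"
  by (simp_all add: hz_def chi_def)

lemma e0_eq_hE: "e0 = (hE False False :: 'k::field_char_0 hel)"
  and e1_eq_hE: "e1 = (hE False True :: 'k::field_char_0 hel)"
  and e2_eq_hE: "e2 = (hE True False :: 'k::field_char_0 hel)"
  and e3_eq_hE: "e3 = (hE True True :: 'k::field_char_0 hel)"
  by (auto intro!: hel_eqI simp: e0_def e1_def e2_def e3_def hb_def hc_def chi_def)

lemma hE_hmul_hmul_hE: "hmul (hmul (hE p q) x) (hE p q) = hsmul (ecoord p q x) (hE p q :: 'k::field_char_0 hel)"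
  and hE_hmul_hmul_hE_opp:
    "hmul (hmul (hE p q) x) (hE (\<not> p) (\<not> q)) = hsmul (zcoord p q x) (hZ p q :: 'k::field_char_0 hel)"
  and hE_hmul_hz: "hmul (hE p q) hz = (hZ p q :: 'k::field_char_0 hel)"
  and hz_hmul_hE: "hmul hz (hE p q) = (hZ (\<not> p) (\<not> q) :: 'k::field_char_0 hel)"
  by (auto intro!: hel_eqI)

lemma hel_expansion:
  fixes x :: "'k::field_char_0 hel"
  defines "part p q \<equiv> hadd (hsmul (ecoord p q x) (hE p q)) (hsmul (zcoord p q x) (hZ p q))"
  shows "x = hadd (hadd (part False False) (part False True)) (hadd (part True False) (part True True))"
  by (auto intro!: hel_eqI simp: part_def)

lemma ideal_hsmul_closed:
  assumes "ideal I (Halg :: 'k::field_char_0 hel ring)" and "x \<in> I"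
  shows "hsmul c x \<in> I"
proof -
  have "hsmul c x = hmul (hsmul c \<one>\<^bsub>Halg\<^esub>) x"
    by (auto intro!: hel_eqI simp: chi_def)
  then show ?thesis
    using ideal.I_l_closed[OF assms, of "hsmul c \<one>\<^bsub>Halg\<^esub>"] by simp
qed

lemma ideal_hsmul_mem:
  assumes "ideal I (Halg :: 'k::field_char_0 hel ring)" and "c \<noteq> 0 \<Longrightarrow> x \<in> I"
  shows "hsmul c x \<in> I"
proof (cases "c = 0")
  case True
  then show ?thesis
    using additive_subgroup.zero_closed[OF ideal.axioms(1)[OF assms(1)]] by (simp add: hsmul_def)
next
  case False
  then show ?thesis using ideal_hsmul_closed[OF assms(1)] assms(2) by blast
qed

lemma ideal_hsmul_cancel:
  assumes "ideal I (Halg :: 'k::field_char_0 hel ring)" and "hsmul c x \<in> I" and "c \<noteq> 0"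
  shows "x \<in> I"
  using ideal_hsmul_closed[OF assms(1,2), of "inverse c"] assms(3)
  by (simp add: hsmul_def mult.assoc[symmetric])

(*
  S and T list the idempotents hE p q and the elements hZ p q = hE p q * z = z * hE (\<not> p) (\<not> q)
  that an ideal contains.
*)
definition coord_ideal :: "(bool \<Rightarrow> bool \<Rightarrow> bool) \<Rightarrow> (bool \<Rightarrow> bool \<Rightarrow> bool) \<Rightarrow> 'k::field hel set" where
  "coord_ideal S T = {x. \<forall>p q. (\<not> S p q \<longrightarrow> ecoord p q x = 0) \<and> (\<not> T p q \<longrightarrow> zcoord p q x = 0)}"

definition admissible :: "(bool \<Rightarrow> bool \<Rightarrow> bool) \<Rightarrow> (bool \<Rightarrow> bool \<Rightarrow> bool) \<Rightarrow> bool" where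
  "admissible S T \<longleftrightarrow> (\<forall>p q. S p q \<longrightarrow> T p q \<and> T (\<not> p) (\<not> q))"

lemma admissible_arrowD:
  assumes "admissible S T" and "\<not> T p q"
  shows "\<not> S p q" and "\<not> S (\<not> p) (\<not> q)"
  using assms(2) assms(1)[unfolded admissible_def, rule_format, of p q]
    assms(1)[unfolded admissible_def, rule_format, of "\<not> p" "\<not> q"] by auto

lemma coord_ideal_mono:
  "(\<And>p q. S p q \<Longrightarrow> S' p q) \<Longrightarrow> (\<And>p q. T p q \<Longrightarrow> T' p q) \<Longrightarrow> coord_ideal S T \<subseteq> coord_ideal S' T'"
  unfolding coord_ideal_def by blast

lemma hE_mem_coord_ideal [simp]: "(hE p q :: 'k::field_char_0 hel) \<in> coord_ideal S T \<longleftrightarrow> S p q"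
  and hZ_mem_coord_ideal [simp]: "(hZ p q :: 'k::field_char_0 hel) \<in> coord_ideal S T \<longleftrightarrow> T p q"
  by (auto simp: coord_ideal_def)

lemma coord_ideal_eq_iff:
  "coord_ideal S T = (coord_ideal S' T' :: 'k::field_char_0 hel set) \<longleftrightarrow> S = S' \<and> T = T'"
proof
  assume eq: "coord_ideal S T = (coord_ideal S' T' :: 'k hel set)"
  have "S p q = S' p q" "T p q = T' p q" for p q
    using hE_mem_coord_ideal[where 'k='k] hZ_mem_coord_ideal[where 'k='k] eq by metis+
  then show "S = S' \<and> T = T'" by (simp add: fun_eq_iff)
qed simp

lemma ideal_coord_ideal:
  assumes "admissible S T"
  shows "ideal (coord_ideal S T) (Halg :: 'k::field_char_0 hel ring)"
proof (rule idealI[OF ring_Halg])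
  show "subgroup (coord_ideal S T) (add_monoid (Halg :: 'k hel ring))"
  proof (rule subgroup.intro)
    fix x :: "'k hel"
    assume "x \<in> coord_ideal S T"
    then show "inv\<^bsub>add_monoid (Halg :: 'k hel ring)\<^esub> x \<in> coord_ideal S T"
      unfolding a_inv_def[symmetric] by (simp add: a_inv_Halg coord_ideal_def)
  qed (auto simp: coord_ideal_def)
  fix a x :: "'k hel"
  assume a: "a \<in> coord_ideal S T"
  have vanish: "zcoord p q a = 0 \<and> ecoord p q a = 0 \<and> ecoord (\<not> p) (\<not> q) a = 0" if "\<not> T p q" for p q
    using a admissible_arrowD[OF assms that] that by (simp add: coord_ideal_def)
  show "x \<otimes>\<^bsub>Halg\<^esub> a \<in> coord_ideal S T" "a \<otimes>\<^bsub>Halg\<^esub> x \<in> coord_ideal S T"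
    using a vanish by (auto simp: coord_ideal_def)
qed

lemma ideal_eq_coord_ideal:
  assumes I: "ideal I (Halg :: 'k::field_char_0 hel ring)"
  shows "I = coord_ideal (\<lambda>p q. hE p q \<in> I) (\<lambda>p q. hZ p q \<in> I)"
proof
  interpret ideal I Halg by (fact I)
  show "I \<subseteq> coord_ideal (\<lambda>p q. hE p q \<in> I) (\<lambda>p q. hZ p q \<in> I)"
  proof (unfold coord_ideal_def, safe)
    fix x p q assume "x \<in> I"
    then have "hsmul (ecoord p q x) (hE p q) \<in> I" "hsmul (zcoord p q x) (hZ p q) \<in> I"
      using I_l_closed I_r_closed
      by (simp_all add: hE_hmul_hmul_hE[symmetric] hE_hmul_hmul_hE_opp[symmetric])
    then show "hE p q \<notin> I \<Longrightarrow> ecoord p q x = 0" "hZ p q \<notin> I \<Longrightarrow> zcoord p q x = 0"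
      using ideal_hsmul_cancel[OF I] by blast+
  qed
  show "coord_ideal (\<lambda>p q. hE p q \<in> I) (\<lambda>p q. hZ p q \<in> I) \<subseteq> I"
  proof
    fix x :: "'k hel"
    assume x: "x \<in> coord_ideal (\<lambda>p q. hE p q \<in> I) (\<lambda>p q. hZ p q \<in> I)"
    have add: "\<And>a b. a \<in> I \<Longrightarrow> b \<in> I \<Longrightarrow> hadd a b \<in> I"
      using additive_subgroup.a_closed[OF is_additive_subgroup] by simp
    have "hsmul (ecoord p q x) (hE p q) \<in> I" "hsmul (zcoord p q x) (hZ p q) \<in> I" for p q
      using x by (auto intro!: ideal_hsmul_mem[OF I] simp: coord_ideal_def)
    then show "x \<in> I"
      by (subst hel_expansion) (intro add)
  qed
qed

lemma admissible_ideal_support: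
  assumes "ideal I (Halg :: 'k::field_char_0 hel ring)"
  shows "admissible (\<lambda>p q. hE p q \<in> I) (\<lambda>p q. hZ p q \<in> I)"
  unfolding admissible_def
  using ideal.I_l_closed[OF assms] ideal.I_r_closed[OF assms] hE_hmul_hz hz_hmul_hE
  by (metis Halg_simps(1,2) UNIV_I)

lemma ideal_Halg_iff:
  "ideal I (Halg :: 'k::field_char_0 hel ring) \<longleftrightarrow> (\<exists>S T. admissible S T \<and> I = coord_ideal S T)"
  using ideal_eq_coord_ideal admissible_ideal_support ideal_coord_ideal by metis

definition principal_support :: "'k::field hel \<Rightarrow> (bool \<Rightarrow> bool \<Rightarrow> bool) \<times> (bool \<Rightarrow> bool \<Rightarrow> bool)" where
  "principal_support g =
     (\<lambda>p q. ecoord p q g \<noteq> 0,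
      \<lambda>p q. zcoord p q g \<noteq> 0 \<or> ecoord p q g \<noteq> 0 \<or> ecoord (\<not> p) (\<not> q) g \<noteq> 0)"

lemma admissible_principal_support: "principal_support g = (S, T) \<Longrightarrow> admissible S T"
  by (auto simp: principal_support_def admissible_def)

lemma genideal_Halg_singleton:
  assumes "principal_support (g :: 'k::field_char_0 hel) = (S, T)"
  shows "genideal Halg {g} = coord_ideal S T"
proof
  have S: "S = (\<lambda>p q. ecoord p q g \<noteq> 0)"
    and T: "T = (\<lambda>p q. zcoord p q g \<noteq> 0 \<or> ecoord p q g \<noteq> 0 \<or> ecoord (\<not> p) (\<not> q) g \<noteq> 0)"
    using assms by (simp_all add: principal_support_def)
  show "genideal Halg {g} \<subseteq> coord_ideal S T"
    using admissible_principal_support[OF assms]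
    by (intro ring.genideal_minimal[OF ring_Halg] ideal_coord_ideal) (auto simp: coord_ideal_def S T)
  have "ideal (genideal Halg {g}) Halg" and "g \<in> genideal Halg {g}"
    by (simp_all add: ring.genideal_ideal[OF ring_Halg] ring.genideal_self'[OF ring_Halg])
  then obtain S' T' where adm: "admissible S' T'" and eq: "genideal Halg {g} = coord_ideal S' T'"
    and g: "g \<in> coord_ideal S' T'"
    unfolding ideal_Halg_iff by blast
  have "S p q \<Longrightarrow> S' p q" and "T p q \<Longrightarrow> T' p q" for p q
    using g admissible_arrowD[OF adm, of p q] by (auto simp: coord_ideal_def S T)
  then show "coord_ideal S T \<subseteq> genideal Halg {g}"
    unfolding eq by (rule coord_ideal_mono)
qed

definition pred_tuple :: "(bool \<Rightarrow> bool \<Rightarrow> bool) \<Rightarrow> bool \<times> bool \<times> bool \<times> bool" where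
  "pred_tuple S = (S False False, S False True, S True False, S True True)"

lemma inj_pred_tuple: "inj pred_tuple"
  by (auto intro!: injI simp: pred_tuple_def fun_eq_iff all_bool_eq)

lemma inj_map_prod_pred_tuple: "inj (map_prod pred_tuple pred_tuple)"
  using map_prod_inj_on[OF inj_pred_tuple inj_pred_tuple] by simp

lemma distinct_principal_support_gens49:
  "distinct (map principal_support (gens49 :: 'k::field_char_0 hel list))"
proof -
  have "distinct (map (map_prod pred_tuple pred_tuple \<circ> principal_support) (gens49 :: 'k hel list))"
    by (simp add: gens49_def Let_def e0_eq_hE e1_eq_hE e2_eq_hE e3_eq_hE chi_def
        principal_support_def pred_tuple_def)
  then show ?thesis
    by (auto simp: distinct_map dest: inj_on_imageI2)
qed

lemma admissible_eq_principal_supports_gens49: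
  "{(S, T). admissible S T} = principal_support ` set (gens49 :: 'k::field_char_0 hel list)"
proof
  show "principal_support ` set gens49 \<subseteq> {(S, T). admissible S T}"
    by (auto split: prod.split intro: admissible_principal_support)
  show "{(S, T). admissible S T} \<subseteq> principal_support ` set (gens49 :: 'k hel list)"
  proof clarify
    fix S T :: "bool \<Rightarrow> bool \<Rightarrow> bool"
    assume "admissible S T"
    then have adm: "(S False False \<longrightarrow> T False False \<and> T True True) \<and>
        (S False True \<longrightarrow> T False True \<and> T True False) \<and>
        (S True False \<longrightarrow> T True False \<and> T False True) \<and>
        (S True True \<longrightarrow> T True True \<and> T False False)"
      by (simp add: admissible_def all_bool_eq)
    have "\<forall>a b c d e f g h. (a \<longrightarrow> e \<and> h) \<and> (b \<longrightarrow> f \<and> g) \<and> (c \<longrightarrow> g \<and> f) \<and> (d \<longrightarrow> h \<and> e) \<longrightarrow>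
        ((a, b, c, d), (e, f, g, h))
          \<in> map_prod pred_tuple pred_tuple ` principal_support ` set (gens49 :: 'k hel list)"
      by (simp add: gens49_def Let_def e0_eq_hE e1_eq_hE e2_eq_hE e3_eq_hE chi_def
          principal_support_def pred_tuple_def all_bool_eq)
    then have "map_prod pred_tuple pred_tuple (S, T)
        \<in> map_prod pred_tuple pred_tuple ` principal_support ` set (gens49 :: 'k hel list)"
      using adm by (simp add: pred_tuple_def)
    then show "(S, T) \<in> principal_support ` set (gens49 :: 'k hel list)"
      by (simp only: inj_image_mem_iff[OF inj_map_prod_pred_tuple])
  qed
qed

theorem theorem5p8:
  shows "length (gens49 :: 'k::{alg_closed_field, field_char_0} hel list) = 49
    \<and> distinct (map (\<lambda>a. genideal (Halg :: 'k hel ring) {a}) gens49)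
    \<and> {I. ideal I (Halg :: 'k hel ring)} = set (map (\<lambda>a. genideal Halg {a}) gens49)"
proof (intro conjI)
  have principal: "(\<lambda>a. genideal Halg {a}) = case_prod coord_ideal \<circ> (principal_support :: 'k hel \<Rightarrow> _)"
  proof
    fix a :: "'k hel"
    show "genideal Halg {a} = (case_prod coord_ideal \<circ> principal_support) a"
      by (cases "principal_support a") (simp add: genideal_Halg_singleton)
  qed
  have inj: "inj (case_prod coord_ideal :: _ \<Rightarrow> 'k hel set)"
    by (auto intro!: injI simp: coord_ideal_eq_iff)
  show "length (gens49 :: 'k hel list) = 49"
    by (simp add: gens49_def Let_def)
  show "distinct (map (\<lambda>a. genideal (Halg :: 'k hel ring) {a}) gens49)"
    unfolding principal map_map[symmetric]
    using distinct_principal_support_gens49 inj_on_subset[OF inj subset_UNIV]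
    by (simp only: distinct_map)
  have "{I. ideal I (Halg :: 'k hel ring)} = case_prod coord_ideal ` {(S, T). admissible S T}"
    by (auto simp: ideal_Halg_iff)
  also have "\<dots> = case_prod coord_ideal ` principal_support ` set (gens49 :: 'k hel list)"
    unfolding admissible_eq_principal_supports_gens49[where 'k = 'k] ..
  also have "\<dots> = set (map (\<lambda>a. genideal Halg {a}) gens49)"
    by (simp add: principal image_comp)
  finally show "{I. ideal I (Halg :: 'k hel ring)} = set (map (\<lambda>a. genideal Halg {a}) gens49)" .
qed

end
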